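(* Let $(a_k)_{k\ge1}$ be an unbounded, monotonically nondecreasing sequence of positive numbers, let $A=\{a_k:k\in\mathbb N\}\subset\mathbb{R}$, and let $\mathcal L'=(\mu_k)_{k\ge1}$ with $\mu_k=a_k^{-1}-a_{k+1}^{-1}$. Then $\mathcal L'$ is monotone (i.e. $\mu_{k+1}\le\mu_k$ for all $k\ge1$) if and only if for each $k\ge1$, $$\frac{a_{k+1}}{a_k}+\frac{a_{k+1}}{a_{k+2}}\ge2.$$ Furthermore, $\overline{\dim}_BA=\overline{\dim}_B\mathcal L'$.
   Context: For a nonempty bounded $B\subset\mathbb{R}^n$, with $B_\varepsilon$ its $\varepsilon$-neighbourhood and $|B_\varepsilon|$ its Lebesgue measure, $\overline{\dim}_BB=\inf\{s\ge0:\limsup_{\varepsilon\to0}|B_\varepsilon|/\varepsilon^{n-s}=0\}$. For a (possibly unbounded) set $A\subset\mathbb{R}^n$ with $0\notin\overline A$, $\overline{\dim}_BA:=\overline{\dim}_B\Phi(A)$ where $\Phi(x)=x/|x|^2$ (so here $\Phi(A)=\{a_k^{-1}:k\in\mathbb N\}$). For a sequence $\mathcal L'=(\mu_j)$ of positive numbers with $\sum_j\mu_j<\infty$, $\overline{\dim}_B\mathcal L':=\inf\{\gamma>0:\sum_{j=1}^\infty\mu_j^{\gamma}<\infty\}$. *)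

theory Defs
  imports "HOL-Analysis.Analysis"
begin

definition eps_nbhd :: "'a::euclidean_space set \<Rightarrow> real \<Rightarrow> 'a set" where
  "eps_nbhd B \<epsilon> = (\<Union>b\<in>B. ball b \<epsilon>)"

definition upper_box_dim :: "'a::euclidean_space set \<Rightarrow> real" where
  "upper_box_dim B = Inf {s. s \<ge> 0 \<and>
     Limsup (at_right 0)
       (\<lambda>\<epsilon>. ereal (measure lebesgue (eps_nbhd B \<epsilon>) / \<epsilon> powr (real DIM('a) - s))) = 0}"

definition inversion :: "'a::euclidean_space \<Rightarrow> 'a" where
  "inversion x = x /\<^sub>R (norm x)\<^sup>2"

text \<open>Upper box dimension of a possibly unbounded set A with 0 not in closure A.\<close>
definition upper_box_dim_unbdd :: "'a::euclidean_space set \<Rightarrow> real" where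
  "upper_box_dim_unbdd A = upper_box_dim (inversion ` A)"

definition upper_box_dim_seq :: "(nat \<Rightarrow> real) \<Rightarrow> real" where
  "upper_box_dim_seq \<mu> = Inf {\<gamma>. \<gamma> > 0 \<and> summable (\<lambda>j. \<mu> (Suc j) powr \<gamma>)}"

end

theory Submission
  imports Defs
begin

text \<open>After inversion, \<open>A\<close> becomes the decreasing null sequence \<open>b j = 1 / a (j+1)\<close>, whose
  gaps \<open>b j - b (j+1)\<close> are the \<open>\<mu>\<close>'s. The \<open>\<epsilon>\<close>-neighbourhood of \<open>{b j}\<close> meets each gap in the
  parts within \<open>\<epsilon>\<close> of its endpoints, so its measure lies between the tube volume
  \<open>T \<epsilon> = (\<Sum>j. min \<epsilon> (\<mu> j))\<close> and \<open>2 (\<epsilon> + T \<epsilon>)\<close>; both dimensions are therefore governed by the growth of \<open>T\<close>.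
  If \<open>\<Sum> \<mu>\<^sup>\<gamma> < \<infinity>\<close> with \<open>\<gamma> \<le> 1\<close>, then \<open>min \<epsilon> \<mu> \<le> \<mu>\<^sup>\<gamma> \<epsilon>\<^sup>1\<^sup>-\<^sup>\<gamma>\<close> gives
  \<open>T \<epsilon> = O(\<epsilon>\<^sup>1\<^sup>-\<^sup>\<gamma>)\<close>. Conversely, if \<open>T \<epsilon> = O(\<epsilon>\<^sup>1\<^sup>-\<^sup>s)\<close> and \<open>s < \<gamma> < 1\<close>, bound \<open>\<mu>\<^sup>\<gamma>\<close>
  by the dyadic series \<open>2 \<Sum>n. q\<^sup>n min 2\<^sup>-\<^sup>n \<mu>\<close> with \<open>q = 2\<^sup>1\<^sup>-\<^sup>\<gamma>\<close>; summing over \<open>j\<close> first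
  yields \<open>\<Sum> \<mu>\<^sup>\<gamma> \<le> C \<Sum>n. (2\<^sup>s\<^sup>-\<^sup>\<gamma>)\<^sup>n < \<infinity>\<close>.
  The monotonicity criterion is the identity \<open>1/y - 1/z \<le> 1/x - 1/y \<longleftrightarrow> 2 \<le> y/x + y/z\<close>.\<close>

text \<open>Up to replacing \<open>\<epsilon>\<close> by \<open>2\<epsilon>\<close>, the volume of the inner \<open>\<epsilon>\<close>-neighbourhood of the fractal
  string with lengths \<open>l\<^sub>j\<close>.\<close>
definition tube_volume :: "(nat \<Rightarrow> real) \<Rightarrow> real \<Rightarrow> real" where
  "tube_volume l \<epsilon> = (\<Sum>j. min \<epsilon> (l j))"

definition box_exponents :: "(real \<Rightarrow> real) \<Rightarrow> real set" where
  "box_exponents V = {s. s \<ge> 0 \<and> Limsup (at_right 0) (\<lambda>\<epsilon>. ereal (V \<epsilon> / \<epsilon> powr (1 - s))) = 0}"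

definition summability_exponents :: "(nat \<Rightarrow> real) \<Rightarrow> real set" where
  "summability_exponents l = {\<gamma>. \<gamma> > 0 \<and> summable (\<lambda>j. l j powr \<gamma>)}"

lemma upper_box_dim_real_eq_Inf_box_exponents:
  "upper_box_dim (B :: real set) = Inf (box_exponents (\<lambda>\<epsilon>. measure lebesgue (eps_nbhd B \<epsilon>)))"
  by (simp add: upper_box_dim_def box_exponents_def)

lemma upper_box_dim_seq_eq_Inf_summability_exponents:
  "upper_box_dim_seq \<mu> = Inf (summability_exponents (\<lambda>j. \<mu> (Suc j)))"
  by (simp add: upper_box_dim_seq_def summability_exponents_def)

lemma ex_gap_containing:
  fixes b :: "nat \<Rightarrow> 'a::linorder"
  assumes "x < b 0" and "b K \<le> x"
  shows "\<exists>n<K. b (Suc n) \<le> x \<and> x < b n"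
  using assms(2)
proof (induction K)
  case 0
  then show ?case using assms(1) by simp
next
  case (Suc K)
  show ?case
  proof (cases "b K \<le> x")
    case True
    then show ?thesis using Suc.IH less_Suc_eq by blast
  next
    case False
    then show ?thesis using Suc.prems by (intro exI[of _ K]) auto
  qed
qed

lemma power_powr_commute: "0 < (x::real) \<Longrightarrow> (x ^ n) powr a = (x powr a) ^ n"
  by (simp add: powr_realpow[symmetric] powr_powr powr_power mult.commute)

lemma min_le_powr_mult_powr:
  fixes \<mu> \<epsilon> \<gamma> :: real
  assumes "0 \<le> \<mu>" "0 < \<epsilon>" "0 < \<gamma>" "\<gamma> \<le> 1"
  shows "min \<epsilon> \<mu> \<le> \<mu> powr \<gamma> * \<epsilon> powr (1 - \<gamma>)"
proof (cases "\<mu> \<le> \<epsilon>")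
  case True
  show ?thesis
  proof (cases "\<mu> = 0")
    case False
    then have "\<mu> = \<mu> powr \<gamma> * \<mu> powr (1 - \<gamma>)"
      using assms by (simp add: powr_add[symmetric])
    also have "\<dots> \<le> \<mu> powr \<gamma> * \<epsilon> powr (1 - \<gamma>)"
      using True assms by (intro mult_left_mono powr_mono2) auto
    finally show ?thesis using True by simp
  qed simp
next
  case False
  have "\<epsilon> = \<epsilon> powr \<gamma> * \<epsilon> powr (1 - \<gamma>)"
    using assms by (simp add: powr_add[symmetric])
  also have "\<dots> \<le> \<mu> powr \<gamma> * \<epsilon> powr (1 - \<gamma>)"
    using False assms by (intro mult_right_mono powr_mono2) auto
  finally show ?thesis using False by simp
qed

lemma powr_le_dyadic_min:
  fixes \<mu> \<gamma> :: real
  assumes "0 < \<mu>" "\<mu> < 1" "0 < \<gamma>" "\<gamma> < 1"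
  obtains n where "\<mu> powr \<gamma> \<le> 2 * (2 powr (1 - \<gamma>)) ^ n * min ((1/2) ^ n) \<mu>"
proof -
  obtain K where "(1/2::real) ^ K < \<mu>"
    using real_arch_pow_inv[of \<mu> "1/2"] assms by auto
  then obtain n where n: "(1/2::real) ^ Suc n \<le> \<mu>" "\<mu> < (1/2) ^ n"
    using ex_gap_containing[of \<mu> "\<lambda>n. (1/2::real) ^ n" K] assms by fastforce
  have "\<mu> powr (\<gamma> - 1) \<le> ((1/2) ^ Suc n) powr (\<gamma> - 1)"
    using assms n by (intro powr_mono2') auto
  also have "\<dots> = 2 powr (1 - \<gamma>) * (2 powr (1 - \<gamma>)) ^ n"
    unfolding power_Suc[symmetric]
    by (simp add: power_powr_commute powr_divide powr_minus_divide[symmetric] del: power_Suc)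
  also have "\<dots> \<le> 2 * (2 powr (1 - \<gamma>)) ^ n"
    using assms powr_mono[of "1 - \<gamma>" 1 "2::real"] by (intro mult_right_mono) auto
  finally have "\<mu> * \<mu> powr (\<gamma> - 1) \<le> \<mu> * (2 * (2 powr (1 - \<gamma>)) ^ n)"
    using assms by (intro mult_left_mono) auto
  moreover have "\<mu> * \<mu> powr (\<gamma> - 1) = \<mu> powr \<gamma>"
    using assms by (simp add: powr_diff)
  moreover have "min ((1/2) ^ n) \<mu> = \<mu>"
    using n by simp
  ultimately show ?thesis
    by (intro that[of n]) (simp add: mult.commute)
qed

lemma summable_min_const:
  fixes l :: "nat \<Rightarrow> real"
  assumes "\<And>j. l j \<ge> 0" "summable l" "0 \<le> \<epsilon>"
  shows "summable (\<lambda>j. min \<epsilon> (l j))"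
  by (rule summable_comparison_test[OF _ assms(2)]) (use assms in auto)

lemma tube_volume_nonneg:
  assumes "\<And>j. l j \<ge> 0" "summable l" "0 \<le> \<epsilon>"
  shows "0 \<le> tube_volume l \<epsilon>"
  unfolding tube_volume_def
  by (rule suminf_nonneg[OF summable_min_const[OF assms]]) (use assms in auto)

lemma sum_min_le_tube_volume:
  assumes "\<And>j. l j \<ge> 0" "summable l" "0 \<le> \<epsilon>" "finite J"
  shows "(\<Sum>j\<in>J. min \<epsilon> (l j)) \<le> tube_volume l \<epsilon>"
  unfolding tube_volume_def
  by (rule sum_le_suminf[OF summable_min_const[OF assms(1-3)] assms(4)]) (use assms in auto)

lemma tube_volume_le_suminf:
  assumes "\<And>j. l j \<ge> 0" "summable l" "0 \<le> \<epsilon>"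
  shows "tube_volume l \<epsilon> \<le> suminf l"
  unfolding tube_volume_def
  by (rule suminf_le[OF _ summable_min_const[OF assms] assms(2)]) simp

lemma tube_volume_le_powr:
  assumes nonneg: "\<And>j. l j \<ge> 0" and summable: "summable (\<lambda>j. l j powr \<gamma>)"
    and "0 < \<gamma>" "\<gamma> \<le> 1" "0 < \<epsilon>"
  shows "tube_volume l \<epsilon> \<le> (\<Sum>j. l j powr \<gamma>) * \<epsilon> powr (1 - \<gamma>)"
proof -
  have le: "min \<epsilon> (l j) \<le> l j powr \<gamma> * \<epsilon> powr (1 - \<gamma>)" for j
    using min_le_powr_mult_powr nonneg assms by simp
  have "tube_volume l \<epsilon> \<le> (\<Sum>j. l j powr \<gamma> * \<epsilon> powr (1 - \<gamma>))"
    unfolding tube_volume_def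
  proof (rule suminf_le[OF le _ summable_mult2[OF summable]])
    show "summable (\<lambda>j. min \<epsilon> (l j))"
      by (rule summable_comparison_test[OF _ summable_mult2[OF summable]])
         (use le nonneg \<open>0 < \<epsilon>\<close> in auto)
  qed
  also have "\<dots> = (\<Sum>j. l j powr \<gamma>) * \<epsilon> powr (1 - \<gamma>)"
    by (rule suminf_mult2[symmetric, OF summable])
  finally show ?thesis .
qed

lemma summable_geometric_min:
  fixes q x :: real
  assumes "0 < q" "q < 2" "0 \<le> x"
  shows "summable (\<lambda>n. q ^ n * min ((1/2) ^ n) x)"
proof (rule summable_comparison_test[OF _ summable_geometric[of "q / 2"]])
  have "q ^ n * min ((1/2) ^ n) x \<le> q ^ n * (1/2) ^ n" for n
    using assms by (intro mult_left_mono) auto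
  then show "\<exists>N. \<forall>n\<ge>N. norm (q ^ n * min ((1/2) ^ n) x) \<le> (q / 2) ^ n"
    using assms by (simp add: power_divide)
qed (use assms in simp)

text \<open>Summing over \<open>j\<close> first turns the tube bound at the scales \<open>2\<^sup>-\<^sup>n\<close> into a
  geometric series of ratio \<open>2\<^sup>s\<^sup>-\<^sup>\<gamma>\<close>.\<close>
lemma summable_dyadic_sums_if_tube_volume_le:
  fixes l :: "nat \<Rightarrow> real"
  assumes nonneg: "\<And>j. l j \<ge> 0" and summable: "summable l"
    and "0 \<le> s" "s < \<gamma>"
    and bound: "\<And>\<epsilon>. 0 < \<epsilon> \<Longrightarrow> tube_volume l \<epsilon> \<le> C * \<epsilon> powr (1 - s)"
  shows "summable (\<lambda>j. \<Sum>n. (2 powr (1 - \<gamma>)) ^ n * min ((1/2) ^ n) (l j))"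
proof -
  define q where "q = (2::real) powr (1 - \<gamma>)"
  define r where "r = (2::real) powr (s - \<gamma>)"
  have q: "0 < q" "q < 2"
    using \<open>s < \<gamma>\<close> \<open>0 \<le> s\<close> powr_less_mono[of "1 - \<gamma>" 1 "2::real"] by (auto simp: q_def)
  have r: "0 < r" "r < 1"
    using \<open>s < \<gamma>\<close> by (auto simp: r_def intro: powr_less_one)
  have terms_summable: "summable (\<lambda>n. q ^ n * min ((1/2) ^ n) (l j))" for j
    by (rule summable_geometric_min[OF q nonneg])
  have scale: "(\<Sum>j\<le>N. q ^ n * min ((1/2) ^ n) (l j)) \<le> C * r ^ n" for N n
  proof -
    have "(\<Sum>j\<le>N. q ^ n * min ((1/2) ^ n) (l j)) = q ^ n * (\<Sum>j\<le>N. min ((1/2) ^ n) (l j))"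
      by (simp add: sum_distrib_left)
    also have "\<dots> \<le> q ^ n * (C * ((1/2) ^ n) powr (1 - s))"
      using q sum_min_le_tube_volume[OF nonneg summable, of "(1/2) ^ n" "{..N}"] bound[of "(1/2) ^ n"]
      by (intro mult_left_mono) auto
    also have "\<dots> = C * (q ^ n * ((1/2::real) ^ n) powr (1 - s))"
      by (simp add: algebra_simps)
    also have "q ^ n * ((1/2::real) ^ n) powr (1 - s) = r ^ n"
      by (simp add: q_def r_def power_powr_commute powr_divide power_mult_distrib[symmetric]
            powr_diff[symmetric])
    finally show ?thesis .
  qed
  have "summable (\<lambda>j. \<Sum>n. q ^ n * min ((1/2) ^ n) (l j))"
  proof (rule bounded_imp_summable)
    show "0 \<le> (\<Sum>n. q ^ n * min ((1/2) ^ n) (l j))" for j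
      using q nonneg by (intro suminf_nonneg[OF terms_summable]) simp
    fix N
    have "(\<Sum>j\<le>N. \<Sum>n. q ^ n * min ((1/2) ^ n) (l j)) = (\<Sum>n. \<Sum>j\<le>N. q ^ n * min ((1/2) ^ n) (l j))"
      by (rule suminf_sum[symmetric, OF terms_summable])
    also have "\<dots> \<le> (\<Sum>n. C * r ^ n)"
      using r by (intro suminf_le scale summable_sum terms_summable summable_mult summable_geometric) auto
    finally show "(\<Sum>j\<le>N. \<Sum>n. q ^ n * min ((1/2) ^ n) (l j)) \<le> (\<Sum>n. C * r ^ n)" .
  qed
  then show ?thesis
    by (simp add: q_def)
qed

lemma summable_powr_if_tube_volume_le:
  fixes l :: "nat \<Rightarrow> real"
  assumes nonneg: "\<And>j. l j \<ge> 0" and summable: "summable l"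
    and "0 \<le> s" "s < \<gamma>" "\<gamma> < 1"
    and bound: "\<And>\<epsilon>. 0 < \<epsilon> \<Longrightarrow> tube_volume l \<epsilon> \<le> C * \<epsilon> powr (1 - s)"
  shows "summable (\<lambda>j. l j powr \<gamma>)"
proof (rule summable_comparison_test_ev)
  define G where "G = (\<lambda>j. \<Sum>n. (2 powr (1 - \<gamma>)) ^ n * min ((1/2) ^ n) (l j))"
  have terms_summable: "summable (\<lambda>n. (2 powr (1 - \<gamma>)) ^ n * min ((1/2) ^ n) (l j))" for j
    using \<open>\<gamma> < 1\<close> powr_less_mono[of "1 - \<gamma>" 1 "2::real"] \<open>0 \<le> s\<close> \<open>s < \<gamma>\<close>
    by (intro summable_geometric_min nonneg) auto
  show "summable (\<lambda>j. 2 * G j)"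
    unfolding G_def
    by (intro summable_mult summable_dyadic_sums_if_tube_volume_le[OF nonneg summable _ _ bound])
       (use assms in auto)
  show "eventually (\<lambda>j. norm (l j powr \<gamma>) \<le> 2 * G j) sequentially"
    using order_tendstoD(2)[OF summable_LIMSEQ_zero[OF summable] zero_less_one]
  proof eventually_elim
    case (elim j)
    have terms_nonneg: "0 \<le> (2 powr (1 - \<gamma>)) ^ n * min ((1/2) ^ n) (l j)" for n
      using nonneg[of j] by simp
    show ?case
    proof (cases "l j = 0")
      case False
      then have "0 < l j"
        using nonneg[of j] by simp
      then obtain n where "l j powr \<gamma> \<le> 2 * (2 powr (1 - \<gamma>)) ^ n * min ((1/2) ^ n) (l j)"
        using powr_le_dyadic_min elim assms by (metis order.strict_trans1)
      moreover have "(2 powr (1 - \<gamma>)) ^ n * min ((1/2) ^ n) (l j) \<le> G j"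
        using sum_le_suminf[OF terms_summable, of "{n}"] terms_nonneg by (simp add: G_def)
      ultimately show ?thesis
        by simp
    qed (simp add: G_def suminf_nonneg[OF terms_summable terms_nonneg])
  qed
qed

lemma summability_exponents_mono:
  assumes nonneg: "\<And>j. l j \<ge> 0" and lim: "l \<longlonglongrightarrow> 0"
    and "\<gamma> \<in> summability_exponents l" "\<gamma> \<le> \<gamma>'"
  shows "\<gamma>' \<in> summability_exponents l"
proof -
  have "eventually (\<lambda>j. norm (l j powr \<gamma>') \<le> l j powr \<gamma>) sequentially"
    using order_tendstoD(2)[OF lim zero_less_one]
    by eventually_elim (use nonneg assms(4) in \<open>simp add: powr_mono'\<close>)
  then have "summable (\<lambda>j. l j powr \<gamma>')"
    by (rule summable_comparison_test_ev) (use assms(3) in \<open>simp add: summability_exponents_def\<close>)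
  then show ?thesis
    using assms(3,4) by (simp add: summability_exponents_def)
qed

lemma tendsto_powr_at_right_0:
  assumes "0 < a"
  shows "((\<lambda>x::real. x powr a) \<longlongrightarrow> 0) (at_right 0)"
  by (rule tendsto_zero_powrI[OF tendsto_ident_at tendsto_const _ assms])
     (use eventually_at_right_less[of "0::real"] in \<open>auto elim: eventually_mono\<close>)

lemma box_exponent_if_summability_exponent:
  assumes nonneg: "\<And>j. l j \<ge> 0"
    and V_nonneg: "\<And>\<epsilon>. 0 < \<epsilon> \<Longrightarrow> 0 \<le> V \<epsilon>"
    and upper: "\<And>\<epsilon>. 0 < \<epsilon> \<Longrightarrow> V \<epsilon> \<le> 2 * (\<epsilon> + tube_volume l \<epsilon>)"
    and \<gamma>: "\<gamma> \<in> summability_exponents l" "\<gamma> \<le> 1" and "\<gamma> < s"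
  shows "s \<in> box_exponents V"
proof -
  have "0 < \<gamma>" and summable: "summable (\<lambda>j. l j powr \<gamma>)"
    using \<gamma> by (auto simp: summability_exponents_def)
  define M where "M = (\<Sum>j. l j powr \<gamma>)"
  define H where "H = (\<lambda>\<epsilon>::real. 2 * (\<epsilon> powr s + M * \<epsilon> powr (s - \<gamma>)))"
  have bound: "V \<epsilon> / \<epsilon> powr (1 - s) \<le> H \<epsilon>" if "0 < \<epsilon>" for \<epsilon>
  proof -
    have "\<epsilon> powr s * \<epsilon> powr (1 - s) = \<epsilon>"
      using that by (simp add: powr_add[symmetric])
    moreover have "\<epsilon> powr (s - \<gamma>) * \<epsilon> powr (1 - s) = \<epsilon> powr (1 - \<gamma>)"
      by (simp add: powr_add[symmetric])
    ultimately have "H \<epsilon> * \<epsilon> powr (1 - s) = 2 * (\<epsilon> + M * \<epsilon> powr (1 - \<gamma>))"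
      by (simp only: H_def mult.assoc distrib_right)
    also have "\<dots> \<ge> V \<epsilon>"
      using upper[OF that] tube_volume_le_powr[OF nonneg summable \<open>0 < \<gamma>\<close> \<gamma>(2) that]
      by (simp add: M_def)
    finally show ?thesis
      using that by (simp add: divide_le_eq)
  qed
  have "(H \<longlongrightarrow> 2 * (0 + M * 0)) (at_right 0)"
    unfolding H_def using \<open>0 < \<gamma>\<close> \<open>\<gamma> < s\<close>
    by (intro tendsto_mult tendsto_add tendsto_const tendsto_powr_at_right_0) auto
  then have H_lim: "(H \<longlongrightarrow> 0) (at_right 0)"
    by simp
  have "eventually (\<lambda>\<epsilon>. 0 \<le> V \<epsilon> / \<epsilon> powr (1 - s)) (at_right 0)"
    using eventually_at_right_less[of "0::real"] by eventually_elim (simp add: V_nonneg)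
  moreover have "eventually (\<lambda>\<epsilon>. V \<epsilon> / \<epsilon> powr (1 - s) \<le> H \<epsilon>) (at_right 0)"
    using eventually_at_right_less[of "0::real"] by eventually_elim (rule bound)
  ultimately have "((\<lambda>\<epsilon>. V \<epsilon> / \<epsilon> powr (1 - s)) \<longlongrightarrow> 0) (at_right 0)"
    by (rule tendsto_sandwich[OF _ _ tendsto_const H_lim])
  then have "((\<lambda>\<epsilon>. ereal (V \<epsilon> / \<epsilon> powr (1 - s))) \<longlongrightarrow> ereal 0) (at_right 0)"
    by (rule tendsto_ereal)
  then have "Limsup (at_right 0) (\<lambda>\<epsilon>. ereal (V \<epsilon> / \<epsilon> powr (1 - s))) = ereal 0"
    by (rule lim_imp_Limsup[OF trivial_limit_at_right_real])
  then show ?thesis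
    using \<open>0 < \<gamma>\<close> \<open>\<gamma> < s\<close> by (simp add: box_exponents_def zero_ereal_def)
qed

lemma summability_exponent_if_box_exponent:
  assumes nonneg: "\<And>j. l j \<ge> 0" and summable: "summable l"
    and lower: "\<And>\<epsilon>. 0 < \<epsilon> \<Longrightarrow> tube_volume l \<epsilon> \<le> V \<epsilon>"
    and s: "s \<in> box_exponents V" and "s < \<gamma>" "\<gamma> < 1"
  shows "\<gamma> \<in> summability_exponents l"
proof -
  have "0 \<le> s" and "Limsup (at_right 0) (\<lambda>\<epsilon>. ereal (V \<epsilon> / \<epsilon> powr (1 - s))) < 1"
    using s by (auto simp: box_exponents_def)
  then obtain \<delta> where "\<delta> > 0" and small: "\<And>\<epsilon>. 0 < \<epsilon> \<Longrightarrow> \<epsilon> < \<delta> \<Longrightarrow> V \<epsilon> / \<epsilon> powr (1 - s) < 1"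
    by (auto dest!: Limsup_lessD simp: eventually_at_right_field)
  define C where "C = max 1 (suminf l / \<delta> powr (1 - s))"
  have bound: "tube_volume l \<epsilon> \<le> C * \<epsilon> powr (1 - s)" if "0 < \<epsilon>" for \<epsilon>
  proof (cases "\<epsilon> < \<delta>")
    case True
    then have "tube_volume l \<epsilon> \<le> \<epsilon> powr (1 - s)"
      using lower[OF that] small[OF that] that by (simp add: divide_less_eq)
    also have "\<dots> \<le> C * \<epsilon> powr (1 - s)"
      using mult_right_mono[OF max.cobounded1, of "\<epsilon> powr (1 - s)" 1] by (simp add: C_def)
    finally show ?thesis .
  next
    case False
    have "tube_volume l \<epsilon> \<le> suminf l"
      using tube_volume_le_suminf[OF nonneg summable] that by simp
    also have "\<dots> = suminf l / \<delta> powr (1 - s) * \<delta> powr (1 - s)"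
      using \<open>\<delta> > 0\<close> by simp
    also have "\<dots> \<le> C * \<epsilon> powr (1 - s)"
      using False \<open>\<delta> > 0\<close> \<open>s < \<gamma>\<close> \<open>\<gamma> < 1\<close>
      by (intro mult_mono powr_mono2) (auto simp: C_def)
    finally show ?thesis .
  qed
  have "summable (\<lambda>j. l j powr \<gamma>)"
    by (rule summable_powr_if_tube_volume_le[OF nonneg summable \<open>0 \<le> s\<close> \<open>s < \<gamma>\<close> \<open>\<gamma> < 1\<close> bound])
  then show ?thesis
    using \<open>0 \<le> s\<close> \<open>s < \<gamma>\<close> by (simp add: summability_exponents_def)
qed

lemma cInf_le_cInf_of_dense:
  fixes A B :: "real set"
  assumes "B \<noteq> {}" "bdd_below A" and dense: "\<And>b t. b \<in> B \<Longrightarrow> b < t \<Longrightarrow> t \<in> A"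
  shows "Inf A \<le> Inf B"
proof (rule cInf_greatest[OF assms(1)])
  fix b assume "b \<in> B"
  show "Inf A \<le> b"
  proof (rule dense_ge)
    fix t assume "b < t"
    show "Inf A \<le> t"
      by (rule cInf_lower[OF dense[OF \<open>b \<in> B\<close> \<open>b < t\<close>] assms(2)])
  qed
qed

lemma Inf_box_exponents_eq_Inf_summability_exponents:
  assumes nonneg: "\<And>j. l j \<ge> 0" and summable: "summable l"
    and lower: "\<And>\<epsilon>. 0 < \<epsilon> \<Longrightarrow> tube_volume l \<epsilon> \<le> V \<epsilon>"
    and upper: "\<And>\<epsilon>. 0 < \<epsilon> \<Longrightarrow> V \<epsilon> \<le> 2 * (\<epsilon> + tube_volume l \<epsilon>)"
  shows "Inf (box_exponents V) = Inf (summability_exponents l)"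
proof (rule antisym)
  have lim: "l \<longlonglongrightarrow> 0"
    by (rule summable_LIMSEQ_zero[OF summable])
  have one: "1 \<in> summability_exponents l"
    using summable nonneg by (simp add: summability_exponents_def abs_of_nonneg)
  have V_nonneg: "0 \<le> V \<epsilon>" if "0 < \<epsilon>" for \<epsilon>
    using tube_volume_nonneg[OF nonneg summable, of \<epsilon>] lower[OF that] that by linarith
  show "Inf (box_exponents V) \<le> Inf (summability_exponents l)"
  proof (rule cInf_le_cInf_of_dense)
    show "bdd_below (box_exponents V)"
      by (rule bdd_belowI[of _ 0]) (simp add: box_exponents_def)
    fix \<gamma> s assume "\<gamma> \<in> summability_exponents l" "\<gamma> < s"
    moreover from this have "min \<gamma> 1 \<in> summability_exponents l"
      using one by (simp add: min_def)
    ultimately show "s \<in> box_exponents V"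
      by (intro box_exponent_if_summability_exponent[OF nonneg V_nonneg upper, of "min \<gamma> 1"]) auto
  qed (use one in blast)
  show "Inf (summability_exponents l) \<le> Inf (box_exponents V)"
  proof (rule cInf_le_cInf_of_dense)
    show "bdd_below (summability_exponents l)"
      by (rule bdd_belowI[of _ 0]) (simp add: summability_exponents_def)
    show "box_exponents V \<noteq> {}"
      using box_exponent_if_summability_exponent[OF nonneg V_nonneg upper one order.refl, of 2] by auto
    fix s t assume s: "s \<in> box_exponents V" and "s < t"
    show "t \<in> summability_exponents l"
    proof (cases "s < 1")
      case True
      define \<gamma> where "\<gamma> = (s + min t 1) / 2"
      have "\<gamma> \<in> summability_exponents l"
        using \<open>s < t\<close> True
        by (intro summability_exponent_if_box_exponent[OF nonneg summable lower s])
           (auto simp: \<gamma>_def)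
      then show ?thesis
        by (rule summability_exponents_mono[OF nonneg lim]) (use \<open>s < t\<close> True in \<open>auto simp: \<gamma>_def\<close>)
    next
      case False
      then show ?thesis
        using summability_exponents_mono[OF nonneg lim one] \<open>s < t\<close> by simp
    qed
  qed
qed

context
  fixes b :: "nat \<Rightarrow> real"
  assumes decseq: "decseq b" and lim: "b \<longlonglongrightarrow> 0"
begin

lemma decseq_nonneg: "0 \<le> b n"
  using decseq_ge[OF decseq lim] .

lemma gaps_nonneg: "0 \<le> b n - b (Suc n)"
  using decseqD[OF decseq, of n "Suc n"] by simp

lemma summable_gaps: "summable (\<lambda>n. b n - b (Suc n))"
  by (rule telescope_summable'[OF lim])

lemma eps_nbhd_decseq_subset: "eps_nbhd (range b) \<epsilon> \<subseteq> {-\<epsilon>..b 0 + \<epsilon>}"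
proof
  fix x assume "x \<in> eps_nbhd (range b) \<epsilon>"
  then obtain j where "\<bar>b j - x\<bar> < \<epsilon>"
    by (auto simp: eps_nbhd_def dist_real_def)
  then show "x \<in> {-\<epsilon>..b 0 + \<epsilon>}"
    using decseq_nonneg[of j] decseqD[OF decseq, of 0 j] by auto
qed

lemma eps_nbhd_decseq_fmeasurable: "eps_nbhd (range b) \<epsilon> \<in> fmeasurable lborel"
proof (rule fmeasurableI2[OF _ eps_nbhd_decseq_subset])
  show "{-\<epsilon>..b 0 + \<epsilon>} \<in> fmeasurable lborel"
    by (metis cbox_interval fmeasurable_cbox)
  show "eps_nbhd (range b) \<epsilon> \<in> sets lborel"
    by (simp add: eps_nbhd_def)
qed

lemma tube_volume_gaps_le_measure_eps_nbhd:
  assumes "0 < \<epsilon>"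
  shows "tube_volume (\<lambda>n. b n - b (Suc n)) \<epsilon> \<le> measure lebesgue (eps_nbhd (range b) \<epsilon>)"
proof -
  define W where "W = (\<lambda>n. {b n - min \<epsilon> (b n - b (Suc n)) <..< b n})"
  have "disjoint_family W"
  proof -
    have "W i \<inter> W j = {}" if "i < j" for i j
      using decseqD[OF decseq, of "Suc i" j] that by (auto simp: W_def)
    then show ?thesis
      unfolding disjoint_family_on_def by (metis inf_commute linorder_neqE_nat)
  qed
  moreover have W_sub: "(\<Union>n. W n) \<subseteq> eps_nbhd (range b) \<epsilon>"
  proof
    fix x assume "x \<in> (\<Union>n. W n)"
    then obtain n where "b n - min \<epsilon> (b n - b (Suc n)) < x" "x < b n"
      by (auto simp: W_def)
    then have "dist (b n) x < \<epsilon>"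
      by (auto simp: dist_real_def)
    then show "x \<in> eps_nbhd (range b) \<epsilon>"
      by (auto simp: eps_nbhd_def)
  qed
  then have "emeasure lborel (\<Union>n. W n) \<noteq> \<infinity>"
    using fmeasurableD2[OF fmeasurableI2[OF eps_nbhd_decseq_fmeasurable]] by (auto simp: W_def)
  ultimately have "(\<lambda>n. measure lborel (W n)) sums measure lborel (\<Union>n. W n)"
    by (intro measure_UNION) (auto simp: W_def)
  moreover have "measure lborel (W n) = min \<epsilon> (b n - b (Suc n))" for n
    using assms gaps_nonneg[of n] by (simp add: W_def)
  ultimately have "tube_volume (\<lambda>n. b n - b (Suc n)) \<epsilon> = measure lborel (\<Union>n. W n)"
    by (simp add: tube_volume_def sums_iff)
  also have "\<dots> \<le> measure lborel (eps_nbhd (range b) \<epsilon>)"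
    by (rule measure_mono_fmeasurable[OF W_sub _ eps_nbhd_decseq_fmeasurable]) (simp add: W_def)
  also have "\<dots> = measure lebesgue (eps_nbhd (range b) \<epsilon>)"
    by (simp add: eps_nbhd_def)
  finally show ?thesis .
qed

text \<open>A point of the gap \<open>[b\<^sub>n\<^sub>+\<^sub>1, b\<^sub>n)\<close> within \<open>\<epsilon>\<close> of the sequence is within \<open>\<epsilon>\<close> of an
  endpoint of that gap, since all other terms lie beyond the endpoints.\<close>
lemma eps_nbhd_decseq_subset_gaps:
  fixes \<epsilon> :: real
  defines "P \<equiv> \<lambda>n. {b (Suc n)..b (Suc n) + min \<epsilon> (b n - b (Suc n))} \<union>
                    {b n - min \<epsilon> (b n - b (Suc n))..b n}"
  shows "eps_nbhd (range b) \<epsilon> \<subseteq> {-\<epsilon>..0} \<union> {b 0..b 0 + \<epsilon>} \<union> (\<Union>n. P n)"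
proof
  fix x assume "x \<in> eps_nbhd (range b) \<epsilon>"
  then obtain j where j: "\<bar>b j - x\<bar> < \<epsilon>"
    by (auto simp: eps_nbhd_def dist_real_def)
  consider "x \<le> 0" | "b 0 \<le> x" | "0 < x" "x < b 0"
    by linarith
  then show "x \<in> {-\<epsilon>..0} \<union> {b 0..b 0 + \<epsilon>} \<union> (\<Union>n. P n)"
  proof cases
    case 1
    then show ?thesis using j decseq_nonneg[of j] by auto
  next
    case 2
    then show ?thesis using j decseqD[OF decseq, of 0 j] by auto
  next
    case 3
    obtain K where "\<forall>n\<ge>K. b n < x"
      using order_tendstoD(2)[OF lim \<open>0 < x\<close>] by (auto simp: eventually_sequentially)
    then have "b K \<le> x"
      by auto
    then obtain n where n: "b (Suc n) \<le> x" "x < b n"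
      using ex_gap_containing[of x b K] 3 by blast
    have "x \<in> P n"
    proof (cases "j \<le> n")
      case True
      then show ?thesis using j n decseqD[OF decseq True] by (auto simp: P_def)
    next
      case False
      then show ?thesis using j n decseqD[OF decseq, of "Suc n" j] by (auto simp: P_def)
    qed
    then show ?thesis by blast
  qed
qed

lemma measure_eps_nbhd_le_tube_volume_gaps:
  assumes "0 < \<epsilon>"
  shows "measure lebesgue (eps_nbhd (range b) \<epsilon>) \<le> 2 * (\<epsilon> + tube_volume (\<lambda>n. b n - b (Suc n)) \<epsilon>)"
proof -
  define m where "m = (\<lambda>n. b n - b (Suc n))"
  define P where "P = (\<lambda>n. {b (Suc n)..b (Suc n) + min \<epsilon> (m n)} \<union> {b n - min \<epsilon> (m n)..b n})"
  have Icc: "{x..y} \<in> fmeasurable lborel" for x y :: real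
    by (metis cbox_interval fmeasurable_cbox)
  have P: "P n \<in> fmeasurable lborel" "measure lborel (P n) \<le> 2 * min \<epsilon> (m n)" for n
  proof -
    show "P n \<in> fmeasurable lborel"
      by (simp add: P_def Icc fmeasurable.Un)
    have "measure lborel (P n) \<le> measure lborel {b (Suc n)..b (Suc n) + min \<epsilon> (m n)}
        + measure lborel {b n - min \<epsilon> (m n)..b n}"
      unfolding P_def by (rule measure_Un_le) auto
    then show "measure lborel (P n) \<le> 2 * min \<epsilon> (m n)"
      using assms gaps_nonneg[of n] by (simp add: m_def)
  qed
  have partial: "measure lborel (\<Union>i\<le>n. P i) \<le> 2 * tube_volume m \<epsilon>" for n
  proof -
    have "measure lborel (\<Union>i\<le>n. P i) \<le> (\<Sum>i\<le>n. measure lborel (P i))"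
      by (rule measure_UNION_le) (auto simp: P_def)
    also have "\<dots> \<le> (\<Sum>i\<le>n. 2 * min \<epsilon> (m i))"
      by (intro sum_mono P)
    also have "\<dots> \<le> 2 * tube_volume m \<epsilon>"
      using sum_min_le_tube_volume[of m \<epsilon> "{..n}"] gaps_nonneg summable_gaps assms
      by (simp add: m_def sum_distrib_left[symmetric])
    finally show ?thesis .
  qed
  have P_Union: "(\<Union>n. P n) \<in> fmeasurable lborel" "measure lborel (\<Union>n. P n) \<le> 2 * tube_volume m \<epsilon>"
    by (rule fmeasurable_countable_Union[of P, OF P(1) partial],
        rule measure_countable_Union_le[of P, OF P(1) partial])
  have "measure lebesgue (eps_nbhd (range b) \<epsilon>) = measure lborel (eps_nbhd (range b) \<epsilon>)"
    by (simp add: eps_nbhd_def)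
  also have "\<dots> \<le> measure lborel ({-\<epsilon>..0} \<union> {b 0..b 0 + \<epsilon>} \<union> (\<Union>n. P n))"
  proof (rule measure_mono_fmeasurable)
    show "eps_nbhd (range b) \<epsilon> \<subseteq> {-\<epsilon>..0} \<union> {b 0..b 0 + \<epsilon>} \<union> (\<Union>n. P n)"
      using eps_nbhd_decseq_subset_gaps[of \<epsilon>] by (simp add: P_def m_def)
    show "{-\<epsilon>..0} \<union> {b 0..b 0 + \<epsilon>} \<union> (\<Union>n. P n) \<in> fmeasurable lborel"
      by (intro fmeasurable.Un Icc P_Union(1))
  qed (rule fmeasurableD[OF eps_nbhd_decseq_fmeasurable])
  also have "\<dots> \<le> measure lborel {-\<epsilon>..0} + measure lborel {b 0..b 0 + \<epsilon>} + measure lborel (\<Union>n. P n)"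
    by (intro order.trans[OF measure_Un_le] add_mono measure_Un_le) (auto simp: P_def)
  also have "\<dots> \<le> 2 * (\<epsilon> + tube_volume m \<epsilon>)"
    using assms P_Union(2) by simp
  finally show ?thesis
    by (simp add: m_def)
qed

lemma upper_box_dim_decseq:
  "upper_box_dim (range b) = Inf (summability_exponents (\<lambda>n. b n - b (Suc n)))"
  unfolding upper_box_dim_real_eq_Inf_box_exponents
  by (rule Inf_box_exponents_eq_Inf_summability_exponents[OF gaps_nonneg summable_gaps
        tube_volume_gaps_le_measure_eps_nbhd measure_eps_nbhd_le_tube_volume_gaps])

end

lemma reciprocal_gaps_le_iff:
  fixes x y z :: real
  assumes "0 < x" "0 < y" "0 < z"
  shows "1/y - 1/z \<le> 1/x - 1/y \<longleftrightarrow> 2 \<le> y/x + y/z"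
proof -
  have "1/y - 1/z \<le> 1/x - 1/y \<longleftrightarrow> 2/y \<le> 1/x + 1/z"
    by auto
  also have "\<dots> \<longleftrightarrow> 2 \<le> (1/x + 1/z) * y"
    using assms(2) by (rule pos_divide_le_eq)
  also have "(1/x + 1/z) * y = y/x + y/z"
    by (simp add: field_simps)
  finally show ?thesis .
qed

lemma filterlim_at_top_if_mono_unbounded:
  fixes f :: "nat \<Rightarrow> real"
  assumes "mono f" "\<not> bdd_above (range f)"
  shows "filterlim f at_top sequentially"
  unfolding filterlim_at_top eventually_sequentially
proof
  fix Z
  obtain N where "Z \<le> f N"
    using assms(2) by (meson bdd_aboveI2 linear)
  then show "\<exists>N. \<forall>n\<ge>N. Z \<le> f n"
    using assms(1) by (meson monoD order.trans)
qed

lemma inversion_real: "0 < (x::real) \<Longrightarrow> inversion x = 1 / x"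
  by (simp add: inversion_def power2_eq_square divide_inverse)

lemma upper_box_dim_unbdd_mono_eq:
  fixes a :: "nat \<Rightarrow> real"
  assumes pos: "\<And>j. 0 < a j" and "mono a" and "filterlim a at_top sequentially"
  shows "upper_box_dim_unbdd (range a) = Inf (summability_exponents (\<lambda>j. 1 / a j - 1 / a (Suc j)))"
proof -
  have "(\<lambda>j. 1 / a j) \<longlonglongrightarrow> 0"
    by (rule tendsto_divide_0[OF tendsto_const filterlim_at_top_imp_at_infinity]) fact
  moreover have "decseq (\<lambda>j. 1 / a j)"
    using \<open>mono a\<close> pos by (auto simp: decseq_def monoD intro!: divide_left_mono)
  moreover have "inversion ` range a = range (\<lambda>j. 1 / a j)"
    unfolding image_image by (simp add: inversion_real pos)
  ultimately show ?thesis
    by (simp add: upper_box_dim_unbdd_def upper_box_dim_decseq)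
qed

theorem lemma2p12:
  fixes a :: "nat \<Rightarrow> real" and \<mu> :: "nat \<Rightarrow> real"
  assumes pos: "\<forall>k\<ge>1. a k > 0"
    and mono: "\<forall>k\<ge>1. a k \<le> a (Suc k)"
    and unbdd: "\<not> bdd_above (a ` {1..})"
    and mu_def: "\<forall>k\<ge>1. \<mu> k = 1 / a k - 1 / a (Suc k)"
  shows "((\<forall>k\<ge>1. \<mu> (Suc k) \<le> \<mu> k) \<longleftrightarrow>
           (\<forall>k\<ge>1. a (Suc k) / a k + a (Suc k) / a (Suc (Suc k)) \<ge> 2))
         \<and> upper_box_dim_unbdd (a ` {1..}) = upper_box_dim_seq \<mu>"
proof
  have "\<mu> (Suc k) \<le> \<mu> k \<longleftrightarrow> 2 \<le> a (Suc k) / a k + a (Suc k) / a (Suc (Suc k))" if "k \<ge> 1" for k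
    using reciprocal_gaps_le_iff[of "a k" "a (Suc k)" "a (Suc (Suc k))"] pos mu_def that
    by (simp del: divide_const_simps)
  then show "(\<forall>k\<ge>1. \<mu> (Suc k) \<le> \<mu> k) \<longleftrightarrow>
               (\<forall>k\<ge>1. a (Suc k) / a k + a (Suc k) / a (Suc (Suc k)) \<ge> 2)"
    by blast
next
  have range_a: "a ` {1..} = range (\<lambda>j. a (Suc j))"
    by (metis One_nat_def atLeast_Suc_greaterThan greaterThan_0 image_image)
  have "mono (\<lambda>j. a (Suc j))"
    unfolding mono_iff_le_Suc using mono by simp
  moreover from this have "filterlim (\<lambda>j. a (Suc j)) at_top sequentially"
    using unbdd unfolding range_a by (rule filterlim_at_top_if_mono_unbounded)
  ultimately have "upper_box_dim_unbdd (range (\<lambda>j. a (Suc j)))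
      = Inf (summability_exponents (\<lambda>j. 1 / a (Suc j) - 1 / a (Suc (Suc j))))"
    using pos by (intro upper_box_dim_unbdd_mono_eq) auto
  moreover have "(\<lambda>j. \<mu> (Suc j)) = (\<lambda>j. 1 / a (Suc j) - 1 / a (Suc (Suc j)))"
    using mu_def by simp
  ultimately show "upper_box_dim_unbdd (a ` {1..}) = upper_box_dim_seq \<mu>"
    by (simp only: range_a upper_box_dim_seq_eq_Inf_summability_exponents)
qed

end
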